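(* Let $k\ge 2$, $r\ge k$, and let $H$ be a complete $k$-partite graph on $h$ vertices. There exists $\gamma_0>0$ such that for every $0<\gamma<\gamma_0$ there exist $\zeta>0$ and $n_0$ with the following property: for every $n\ge n_0$, if $P$ is a complete $s$-partite $K_{r+1}$-free graph on $n$ vertices with $\mathcal N(H,P)\ge \mathrm{ex}(n,H,K_{r+1})-\zeta n^h$, then $s=r$ and every part of $P$ has size at least $\gamma n$.
   Context: $\mathcal N(H,G)$ is the number of subgraphs of $G$ isomorphic to $H$; $\mathrm{ex}(n,H,K_{r+1})$ is the maximum of $\mathcal N(H,G)$ over $n$-vertex graphs $G$ containing no clique $K_{r+1}$. *)

theory Defs
  imports Complex_Main "HOL-Library.Disjoint_Sets"
begin

definition sgraph :: "'a set \<Rightarrow> 'a set set \<Rightarrow> bool" where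
  "sgraph V E \<longleftrightarrow> finite V \<and> (\<forall>e\<in>E. e \<subseteq> V \<and> card e = 2)"

definition graph_iso :: "'a set \<Rightarrow> 'a set set \<Rightarrow> 'b set \<Rightarrow> 'b set set \<Rightarrow> bool" where
  "graph_iso V1 E1 V2 E2 \<longleftrightarrow>
     (\<exists>f. bij_betw f V1 V2 \<and> (\<forall>u\<in>V1. \<forall>v\<in>V1. {u, v} \<in> E1 \<longleftrightarrow> {f u, f v} \<in> E2))"

definition count_copies :: "'b set \<Rightarrow> 'b set set \<Rightarrow> 'a set \<Rightarrow> 'a set set \<Rightarrow> nat" where
  "count_copies HV HE GV GE =
     card {(U, F). U \<subseteq> GV \<and> F \<subseteq> GE \<and> (\<forall>e\<in>F. e \<subseteq> U) \<and> graph_iso HV HE U F}"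

definition clique_free :: "'a set \<Rightarrow> 'a set set \<Rightarrow> nat \<Rightarrow> bool" where
  "clique_free V E m \<longleftrightarrow>
     \<not> (\<exists>S\<subseteq>V. card S = m \<and> (\<forall>u\<in>S. \<forall>v\<in>S. u \<noteq> v \<longrightarrow> {u, v} \<in> E))"

text \<open>ex(n,H,K_m): maximum of N(H,G) over n-vertex K_m-free graphs G
  (vertex set {0..<n} without loss of generality).\<close>
definition ex_gen :: "nat \<Rightarrow> 'b set \<Rightarrow> 'b set set \<Rightarrow> nat \<Rightarrow> nat" where
  "ex_gen n HV HE m =
     Max {count_copies HV HE {..<n} E | E. sgraph {..<n} E \<and> clique_free {..<n} E m}"

definition complete_multipartite :: "'a set \<Rightarrow> 'a set set \<Rightarrow> 'a set set \<Rightarrow> bool" where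
  "complete_multipartite V E Ps \<longleftrightarrow>
     partition_on V Ps \<and>
     E = {{u, v} | u v. u \<in> V \<and> v \<in> V \<and> (\<forall>X\<in>Ps. \<not> (u \<in> X \<and> v \<in> X))}"

end

(* Up to the factor |Aut H|, a complete multipartite graph on n vertices whose classes have
   relative sizes x contains n^h p(x) + O(n^(h-1)) copies of H, where p(x) sums, over the proper
   r-colourings of H, the products of the weights of the colours used.  Because H is complete
   k-partite with 2 <= k <= r, splitting the weight of a class with an empty class increases p,
   so the maximum of p on the compact face of the simplex where some weight vanishes is strictly
   below its global maximum.  By continuity, every weight vector with a coordinate below some
   delta loses a fixed amount m.  Hence a graph P with fewer than r classes, or with a class
   smaller than delta n, has about m n^h / |Aut H| fewer copies of H than the complete r-partite
   graph obtained by rounding an optimal weight vector, which exceeds zeta n^h for large n. *)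

theory Submission
  imports Defs "HOL-Analysis.Analysis"
begin

section \<open>Homomorphism densities of H in complete r-partite graphs\<close>

definition proper_colorings :: "'b set \<Rightarrow> 'b set set \<Rightarrow> nat \<Rightarrow> ('b \<Rightarrow> nat) set" where
  "proper_colorings HV HE r =
     {\<tau> \<in> HV \<rightarrow>\<^sub>E {..<r}. \<forall>u\<in>HV. \<forall>v\<in>HV. {u,v} \<in> HE \<longrightarrow> \<tau> u \<noteq> \<tau> v}"

text \<open>The homomorphism density of H in the complete r-partite graph whose classes carry
  the weights x 0, ..., x (r - 1).\<close>
definition hom_density :: "'b set \<Rightarrow> 'b set set \<Rightarrow> nat \<Rightarrow> (nat \<Rightarrow> real) \<Rightarrow> real" where
  "hom_density HV HE r x = (\<Sum>\<tau>\<in>proper_colorings HV HE r. \<Prod>v\<in>HV. x (\<tau> v))"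

definition weight_simplex :: "nat \<Rightarrow> (nat \<Rightarrow> real) set" where
  "weight_simplex r =
     {x. (\<forall>l<r. 0 \<le> x l \<and> x l \<le> 1) \<and> (\<forall>l\<ge>r. x l = 0) \<and> (\<Sum>l<r. x l) = 1}"

lemma finite_proper_colorings: "finite HV \<Longrightarrow> finite (proper_colorings HV HE r)"
  unfolding proper_colorings_def
  by (rule finite_subset[of _ "HV \<rightarrow>\<^sub>E {..<r}"]) (auto intro: finite_PiE)

lemma weight_simplex_eq:
  "weight_simplex r =
     PiE UNIV (\<lambda>l. if l < r then {0..1::real} else {0}) \<inter> {x. (\<Sum>l<r. x l) = 1}"
proof (intro set_eqI iffI)
  fix x assume "x \<in> weight_simplex r"
  then show "x \<in> PiE UNIV (\<lambda>l. if l < r then {0..1::real} else {0}) \<inter> {x. (\<Sum>l<r. x l) = 1}"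
    by (auto simp: weight_simplex_def PiE_iff)
next
  fix x assume x: "x \<in> PiE UNIV (\<lambda>l. if l < r then {0..1::real} else {0}) \<inter> {x. (\<Sum>l<r. x l) = 1}"
  then have l: "x l \<in> (if l < r then {0..1::real} else {0})" for l
    by (auto simp: PiE_iff)
  have "\<forall>l<r. 0 \<le> x l \<and> x l \<le> 1" using l by (metis atLeastAtMost_iff)
  moreover have "\<forall>l\<ge>r. x l = 0" using l by (metis not_less singletonD)
  ultimately show "x \<in> weight_simplex r" using x unfolding weight_simplex_def by blast
qed

lemma compact_weight_simplex: "compact (weight_simplex r)"
proof -
  have "compactin (product_topology (\<lambda>_. euclidean) UNIV)
          (PiE UNIV (\<lambda>l::nat. if l < r then {0..1::real} else {0}))"
    by (subst compactin_PiE) auto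
  then have "compact (PiE UNIV (\<lambda>l::nat. if l < r then {0..1::real} else {0}))"
    by (simp add: euclidean_product_topology)
  moreover have "closed {x::nat\<Rightarrow>real. (\<Sum>l<r. x l) = 1}"
    by (rule closed_Collect_eq) (auto intro!: continuous_intros)
  ultimately show ?thesis
    unfolding weight_simplex_eq by (rule compact_Int_closed)
qed

lemma continuous_on_hom_density: "continuous_on A (hom_density HV HE r)"
  unfolding hom_density_def
  by (intro continuous_intros continuous_on_subset[OF continuous_on_product_coordinates]) auto

lemma abs_prod_diff_le_sum_abs_diff:
  fixes a b :: "'i \<Rightarrow> real"
  assumes "finite I" "\<And>i. i \<in> I \<Longrightarrow> 0 \<le> a i \<and> a i \<le> 1 \<and> 0 \<le> b i \<and> b i \<le> 1"
  shows "\<bar>(\<Prod>i\<in>I. a i) - (\<Prod>i\<in>I. b i)\<bar> \<le> (\<Sum>i\<in>I. \<bar>a i - b i\<bar>)"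
  using assms
proof (induction I rule: finite_induct)
  case empty then show ?case by simp
next
  case (insert i I)
  define A where "A = (\<Prod>i\<in>I. a i)"
  define B where "B = (\<Prod>i\<in>I. b i)"
  have A: "0 \<le> A" "A \<le> 1" and B: "0 \<le> B" "B \<le> 1"
    unfolding A_def B_def using insert by (auto intro: prod_nonneg prod_le_1)
  have ab: "0 \<le> a i" "a i \<le> 1" "0 \<le> b i" "b i \<le> 1" using insert by auto
  have "\<bar>a i * A - b i * B\<bar> = \<bar>(a i - b i) * A + b i * (A - B)\<bar>"
    by (simp add: algebra_simps)
  also have "\<dots> \<le> \<bar>(a i - b i) * A\<bar> + \<bar>b i * (A - B)\<bar>"
    by (rule abs_triangle_ineq)
  also have "\<dots> = \<bar>a i - b i\<bar> * A + b i * \<bar>A - B\<bar>"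
    using A ab by (simp add: abs_mult)
  also have "\<dots> \<le> \<bar>a i - b i\<bar> + \<bar>A - B\<bar>"
    using A ab by (intro add_mono mult_left_le mult_left_le_one_le) auto
  finally have "\<bar>a i * A - b i * B\<bar> \<le> \<bar>a i - b i\<bar> + \<bar>A - B\<bar>" .
  moreover have "\<bar>A - B\<bar> \<le> (\<Sum>i\<in>I. \<bar>a i - b i\<bar>)"
    using insert unfolding A_def B_def by auto
  moreover have "(\<Prod>i\<in>insert i I. a i) = a i * A" "(\<Prod>i\<in>insert i I. b i) = b i * B"
    "(\<Sum>i\<in>insert i I. \<bar>a i - b i\<bar>) = \<bar>a i - b i\<bar> + (\<Sum>i\<in>I. \<bar>a i - b i\<bar>)"
    using insert(1,2) unfolding A_def B_def by simp_all
  ultimately show ?case by linarith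
qed

lemma hom_density_lipschitz:
  assumes "finite HV" and x: "x \<in> weight_simplex r" and y: "y \<in> weight_simplex r"
    and close: "\<And>t. t < r \<Longrightarrow> \<bar>x t - y t\<bar> \<le> e"
  shows "\<bar>hom_density HV HE r x - hom_density HV HE r y\<bar>
           \<le> real (card (proper_colorings HV HE r) * card HV) * e"
proof -
  have xr: "\<And>t. t < r \<Longrightarrow> 0 \<le> x t \<and> x t \<le> 1" and yr: "\<And>t. t < r \<Longrightarrow> 0 \<le> y t \<and> y t \<le> 1"
    using x y unfolding weight_simplex_def by auto
  have "\<bar>hom_density HV HE r x - hom_density HV HE r y\<bar>
      \<le> (\<Sum>\<tau>\<in>proper_colorings HV HE r. \<bar>(\<Prod>v\<in>HV. x (\<tau> v)) - (\<Prod>v\<in>HV. y (\<tau> v))\<bar>)"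
    unfolding hom_density_def sum_subtractf[symmetric] by (rule sum_abs)
  also have "\<dots> \<le> (\<Sum>\<tau>\<in>proper_colorings HV HE r. real (card HV) * e)"
  proof (rule sum_mono)
    fix \<tau> assume "\<tau> \<in> proper_colorings HV HE r"
    then have \<tau>: "\<And>v. v \<in> HV \<Longrightarrow> \<tau> v < r" unfolding proper_colorings_def by auto
    have "\<bar>(\<Prod>v\<in>HV. x (\<tau> v)) - (\<Prod>v\<in>HV. y (\<tau> v))\<bar> \<le> (\<Sum>v\<in>HV. \<bar>x (\<tau> v) - y (\<tau> v)\<bar>)"
      by (rule abs_prod_diff_le_sum_abs_diff) (use assms(1) xr yr \<tau> in auto)
    also have "\<dots> \<le> (\<Sum>v\<in>HV. e)" by (rule sum_mono) (use close \<tau> in auto)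
    finally show "\<bar>(\<Prod>v\<in>HV. x (\<tau> v)) - (\<Prod>v\<in>HV. y (\<tau> v))\<bar> \<le> real (card HV) * e"
      by simp
  qed
  finally show ?thesis by simp
qed

lemma sum_recolor_fibre:
  assumes "i < r" "j < r" "i \<noteq> j" "x i = 0" "y i + y j = x j"
    "\<And>l. l \<noteq> i \<Longrightarrow> l \<noteq> j \<Longrightarrow> y l = x l" "t < r"
  shows "(\<Sum>l\<in>{l. l < r \<and> (if l = i then j else l) = t}. y l) = x t"
proof -
  consider "t = j" | "t = i" | "t \<noteq> i" "t \<noteq> j" by blast
  then show ?thesis
  proof cases
    case 1
    then have "{l. l < r \<and> (if l = i then j else l) = t} = {i, j}" using assms by auto
    then show ?thesis using assms 1 by simp
  next
    case 2
    then have "{l. l < r \<and> (if l = i then j else l) = t} = {}" using assms by auto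
    then show ?thesis using assms 2 by simp
  next
    case 3
    then have "{l. l < r \<and> (if l = i then j else l) = t} = {t}" using assms by auto
    then show ?thesis using assms 3 by simp
  qed
qed

text \<open>Splitting the weight of class j between j and an empty class i: the colorings that
  stay proper after merging i into j contribute exactly the old density.\<close>
lemma hom_density_split_class:
  fixes x y :: "nat \<Rightarrow> real"
  assumes fin: "finite HV" and ij: "i < r" "j < r" "i \<noteq> j" and xi: "x i = 0"
    and yij: "y i + y j = x j" and yo: "\<And>l. l \<noteq> i \<Longrightarrow> l \<noteq> j \<Longrightarrow> y l = x l"
  defines "recolor \<equiv> (\<lambda>\<sigma>. restrict (\<lambda>v. if \<sigma> v = i then j else \<sigma> v) HV)"
  shows "hom_density HV HE r y = hom_density HV HE r x +
     (\<Sum>\<sigma>\<in>{\<sigma>\<in>proper_colorings HV HE r. recolor \<sigma> \<notin> proper_colorings HV HE r}. \<Prod>v\<in>HV. y (\<sigma> v))"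
proof -
  define Fun where "Fun = HV \<rightarrow>\<^sub>E {..<r}"
  define C where "C = proper_colorings HV HE r"
  define g where "g = (\<lambda>\<sigma>. \<Prod>v\<in>HV. y (\<sigma> v))"
  define fibre where "fibre = (\<lambda>\<tau>. PiE HV (\<lambda>v. {l. l < r \<and> (if l = i then j else l) = \<tau> v}))"
  have finF: "finite Fun" unfolding Fun_def using fin by (auto intro: finite_PiE)
  have finC: "finite C" unfolding C_def using fin by (rule finite_proper_colorings)
  have CF: "C \<subseteq> Fun" unfolding C_def proper_colorings_def Fun_def by auto
  have recolor_C: "\<sigma> \<in> C" if "\<sigma> \<in> Fun" "recolor \<sigma> \<in> C" for \<sigma>
  proof -
    have "\<sigma> u \<noteq> \<sigma> v" if "u \<in> HV" "v \<in> HV" "{u,v} \<in> HE" for u v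
    proof
      assume "\<sigma> u = \<sigma> v"
      then have "recolor \<sigma> u = recolor \<sigma> v" using that unfolding recolor_def by auto
      then show False
        using \<open>recolor \<sigma> \<in> C\<close> that unfolding C_def proper_colorings_def by blast
    qed
    then show ?thesis using \<open>\<sigma> \<in> Fun\<close> unfolding C_def proper_colorings_def Fun_def by auto
  qed
  have fibre: "{\<sigma> \<in> Fun. recolor \<sigma> = \<tau>} = fibre \<tau>" if "\<tau> \<in> Fun" for \<tau>
  proof (intro set_eqI iffI)
    fix \<sigma> assume "\<sigma> \<in> {\<sigma> \<in> Fun. recolor \<sigma> = \<tau>}"
    then have "\<sigma> \<in> Fun" "\<forall>v\<in>HV. (if \<sigma> v = i then j else \<sigma> v) = \<tau> v"
      unfolding recolor_def by auto
    then show "\<sigma> \<in> fibre \<tau>" unfolding Fun_def fibre_def by (auto simp: PiE_iff)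
  next
    fix \<sigma> assume s: "\<sigma> \<in> fibre \<tau>"
    then have "\<sigma> \<in> Fun" unfolding Fun_def fibre_def by (auto simp: PiE_iff)
    moreover have "recolor \<sigma> = \<tau>"
    proof
      fix v show "recolor \<sigma> v = \<tau> v"
        using s that unfolding recolor_def Fun_def fibre_def
        by (cases "v \<in> HV") (auto simp: PiE_iff extensional_def)
    qed
    ultimately show "\<sigma> \<in> {\<sigma> \<in> Fun. recolor \<sigma> = \<tau>}" by simp
  qed
  have "(\<Sum>\<sigma>\<in>{\<sigma>\<in>C. recolor \<sigma> \<in> C}. g \<sigma>) = (\<Sum>\<sigma>\<in>{\<sigma>\<in>Fun. recolor \<sigma> \<in> C}. g \<sigma>)"
    using CF recolor_C by (intro sum.cong) auto
  also have "\<dots> = (\<Sum>\<tau>\<in>C. \<Sum>\<sigma>\<in>{\<sigma>\<in>{\<sigma>\<in>Fun. recolor \<sigma> \<in> C}. recolor \<sigma> = \<tau>}. g \<sigma>)"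
    by (rule sum.group[symmetric]) (use finF finC in auto)
  also have "\<dots> = (\<Sum>\<tau>\<in>C. \<Sum>\<sigma>\<in>fibre \<tau>. g \<sigma>)"
  proof (rule sum.cong[OF refl])
    fix \<tau> assume "\<tau> \<in> C"
    then have "{\<sigma>\<in>{\<sigma>\<in>Fun. recolor \<sigma> \<in> C}. recolor \<sigma> = \<tau>} = {\<sigma> \<in> Fun. recolor \<sigma> = \<tau>}"
      by auto
    also have "\<dots> = fibre \<tau>" using fibre \<open>\<tau> \<in> C\<close> CF by auto
    finally have "{\<sigma>\<in>{\<sigma>\<in>Fun. recolor \<sigma> \<in> C}. recolor \<sigma> = \<tau>} = fibre \<tau>" .
    then show "(\<Sum>\<sigma>\<in>{\<sigma>\<in>{\<sigma>\<in>Fun. recolor \<sigma> \<in> C}. recolor \<sigma> = \<tau>}. g \<sigma>) = (\<Sum>\<sigma>\<in>fibre \<tau>. g \<sigma>)"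
      by simp
  qed
  also have "\<dots> = (\<Sum>\<tau>\<in>C. \<Prod>v\<in>HV. \<Sum>l\<in>{l. l < r \<and> (if l = i then j else l) = \<tau> v}. y l)"
    unfolding g_def fibre_def by (intro sum.cong[OF refl] prod_sum_PiE[symmetric]) (use fin in auto)
  also have "\<dots> = (\<Sum>\<tau>\<in>C. \<Prod>v\<in>HV. x (\<tau> v))"
  proof (intro sum.cong[OF refl] prod.cong[OF refl])
    fix \<tau> v assume "\<tau> \<in> C" "v \<in> HV"
    then have "\<tau> v < r" unfolding C_def proper_colorings_def by auto
    then show "(\<Sum>l\<in>{l. l < r \<and> (if l = i then j else l) = \<tau> v}. y l) = x (\<tau> v)"
      by (intro sum_recolor_fibre[of i r j x y]) (use ij xi yij yo in auto)
  qed
  finally have "(\<Sum>\<sigma>\<in>{\<sigma>\<in>C. recolor \<sigma> \<in> C}. g \<sigma>) = hom_density HV HE r x"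
    unfolding hom_density_def C_def by simp
  moreover have "(\<Sum>\<sigma>\<in>C. g \<sigma>)
      = (\<Sum>\<sigma>\<in>{\<sigma>\<in>C. recolor \<sigma> \<in> C}. g \<sigma>) + (\<Sum>\<sigma>\<in>{\<sigma>\<in>C. recolor \<sigma> \<notin> C}. g \<sigma>)"
  proof -
    have "C = {\<sigma>\<in>C. recolor \<sigma> \<in> C} \<union> {\<sigma>\<in>C. recolor \<sigma> \<notin> C}" by auto
    moreover have "(\<Sum>\<sigma>\<in>{\<sigma>\<in>C. recolor \<sigma> \<in> C} \<union> {\<sigma>\<in>C. recolor \<sigma> \<notin> C}. g \<sigma>) =
        (\<Sum>\<sigma>\<in>{\<sigma>\<in>C. recolor \<sigma> \<in> C}. g \<sigma>) + (\<Sum>\<sigma>\<in>{\<sigma>\<in>C. recolor \<sigma> \<notin> C}. g \<sigma>)"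
      by (rule sum.union_disjoint) (use finC in auto)
    ultimately show ?thesis by metis
  qed
  ultimately show ?thesis unfolding hom_density_def C_def g_def by simp
qed

lemma partition_on_part_unique:
  assumes "partition_on A P" "X \<in> P" "Y \<in> P" "x \<in> X" "x \<in> Y"
  shows "X = Y"
  using assms partition_onD2[OF assms(1)] unfolding disjoint_def by blast

lemma partition_on_the_part:
  assumes "partition_on A P" "x \<in> A"
  shows "(THE X. X \<in> P \<and> x \<in> X) \<in> P" "x \<in> (THE X. X \<in> P \<and> x \<in> X)"
proof -
  obtain X where X: "X \<in> P" "x \<in> X" using partition_onD1[OF assms(1)] assms(2) by blast
  have "(THE X. X \<in> P \<and> x \<in> X) = X"
    using X partition_on_part_unique[OF assms(1)] by (intro the_equality) auto
  then show "(THE X. X \<in> P \<and> x \<in> X) \<in> P" "x \<in> (THE X. X \<in> P \<and> x \<in> X)" using X by simp_all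
qed

lemma complete_multipartite_edge_iff:
  assumes "complete_multipartite V E P" "u \<in> V" "v \<in> V"
  shows "{u,v} \<in> E \<longleftrightarrow> (\<forall>X\<in>P. \<not> (u \<in> X \<and> v \<in> X))"
proof
  assume "{u,v} \<in> E"
  then obtain u' v' where "{u,v} = {u',v'}" "\<forall>X\<in>P. \<not> (u' \<in> X \<and> v' \<in> X)"
    using assms(1) unfolding complete_multipartite_def by blast
  then show "\<forall>X\<in>P. \<not> (u \<in> X \<and> v \<in> X)" by (auto simp: doubleton_eq_iff)
next
  assume "\<forall>X\<in>P. \<not> (u \<in> X \<and> v \<in> X)"
  then show "{u,v} \<in> E" using assms unfolding complete_multipartite_def by blast
qed

lemma proper_coloring_with_edge_colors:
  assumes cm: "complete_multipartite HV HE Q" and cQ: "card Q = k" and k: "2 \<le> k" "k \<le> r"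
    and ij: "i < r" "j < r" "i \<noteq> j" and fin: "finite HV"
  shows "\<exists>\<sigma>\<in>proper_colorings HV HE r. \<exists>u\<in>HV. \<exists>v\<in>HV. {u,v} \<in> HE \<and> \<sigma> u = i \<and> \<sigma> v = j"
proof -
  have pQ: "partition_on HV Q" using cm unfolding complete_multipartite_def by simp
  have finQ: "finite Q" using finite_elements[OF fin pQ] .
  have "\<not> card Q \<le> Suc 0" using k cQ by simp
  then obtain Q1 Q2 where Q12: "Q1 \<in> Q" "Q2 \<in> Q" "Q1 \<noteq> Q2"
    using card_le_Suc0_iff_eq[OF finQ] by blast
  have "card (Q - {Q1, Q2}) \<le> card ({..<r} - {i, j})"
    using Q12 cQ finQ ij k by (simp add: card_Diff_subset)
  then obtain c' where c': "c' ` (Q - {Q1, Q2}) \<subseteq> {..<r} - {i, j}" "inj_on c' (Q - {Q1, Q2})"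
    using card_le_inj[of "Q - {Q1, Q2}" "{..<r} - {i, j}"] finQ by auto
  define c where "c = c'(Q1 := i, Q2 := j)"
  have cr: "c X < r" if "X \<in> Q" for X using c' that ij unfolding c_def by auto
  have cinj: "inj_on c Q"
  proof (rule inj_onI)
    fix X Y assume XY: "X \<in> Q" "Y \<in> Q" "c X = c Y"
    show "X = Y"
    proof (cases "X \<in> {Q1,Q2} \<or> Y \<in> {Q1,Q2}")
      case True then show ?thesis using XY c' ij Q12 unfolding c_def by (auto split: if_splits)
    next
      case False then show ?thesis using XY c' unfolding c_def by (auto dest: inj_onD)
    qed
  qed
  define part where "part = (\<lambda>v. THE X. X \<in> Q \<and> v \<in> X)"
  have part: "part v \<in> Q" "v \<in> part v" if "v \<in> HV" for v
    using partition_on_the_part[OF pQ that] unfolding part_def by auto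
  have part_eq: "part v = X" if "X \<in> Q" "v \<in> X" for v X
    using part partition_on_part_unique[OF pQ] partition_onD1[OF pQ] that by blast
  define \<sigma> where "\<sigma> = restrict (\<lambda>v. c (part v)) HV"
  have "\<sigma> \<in> proper_colorings HV HE r"
    unfolding proper_colorings_def
  proof (intro CollectI conjI ballI impI)
    show "\<sigma> \<in> HV \<rightarrow>\<^sub>E {..<r}" unfolding \<sigma>_def using part cr by auto
    fix u v assume uv: "u \<in> HV" "v \<in> HV" "{u,v} \<in> HE"
    then have "part u \<noteq> part v" using part complete_multipartite_edge_iff[OF cm] by blast
    then show "\<sigma> u \<noteq> \<sigma> v" using cinj part uv unfolding \<sigma>_def by (auto dest: inj_onD)
  qed
  moreover obtain u v where uv: "u \<in> Q1" "v \<in> Q2"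
    using Q12 partition_onD3[OF pQ] by (metis all_not_in_conv)
  moreover have uvH: "u \<in> HV" "v \<in> HV" using uv Q12 partition_onD1[OF pQ] by auto
  moreover have "{u,v} \<in> HE"
    using complete_multipartite_edge_iff[OF cm uvH] partition_on_part_unique[OF pQ] uv Q12 by blast
  moreover have "\<sigma> u = i" "\<sigma> v = j"
    using part_eq[OF Q12(1) uv(1)] part_eq[OF Q12(2) uv(2)] uvH Q12(3) unfolding \<sigma>_def c_def by auto
  ultimately show ?thesis by blast
qed

lemma hom_density_split_class_ge:
  assumes "finite HV" and ij: "i < r" "j < r" "i \<noteq> j" and "x i = 0"
    and "y i + y j = x j" and "\<And>l. l \<noteq> i \<Longrightarrow> l \<noteq> j \<Longrightarrow> y l = x l"
    and y: "\<And>l. l < r \<Longrightarrow> 0 \<le> y l"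
  shows "hom_density HV HE r x \<le> hom_density HV HE r y"
proof -
  have "0 \<le> (\<Prod>v\<in>HV. y (\<sigma> v))" if "\<sigma> \<in> proper_colorings HV HE r" for \<sigma>
    using that y unfolding proper_colorings_def by (auto intro!: prod_nonneg)
  then show ?thesis
    using hom_density_split_class[OF assms(1-7), of HE] by (smt (verit) mem_Collect_eq sum_nonneg)
qed

lemma hom_density_split_class_gt:
  assumes cm: "complete_multipartite HV HE Q" and "card Q = k" "2 \<le> k" "k \<le> r"
    and fin: "finite HV" and ij: "i < r" "j < r" "i \<noteq> j" and "x i = 0"
    and "y i + y j = x j" and "\<And>l. l \<noteq> i \<Longrightarrow> l \<noteq> j \<Longrightarrow> y l = x l"
    and y: "\<And>l. l < r \<Longrightarrow> 0 < y l"
  shows "hom_density HV HE r x < hom_density HV HE r y"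
proof -
  define recolor where "recolor = (\<lambda>\<sigma>. restrict (\<lambda>v. if \<sigma> v = i then j else \<sigma> v) HV)"
  define lost where "lost = {\<sigma>\<in>proper_colorings HV HE r. recolor \<sigma> \<notin> proper_colorings HV HE r}"
  obtain \<sigma> u v where \<sigma>: "\<sigma> \<in> proper_colorings HV HE r" "u \<in> HV" "v \<in> HV" "{u,v} \<in> HE"
    "\<sigma> u = i" "\<sigma> v = j"
    using proper_coloring_with_edge_colors[OF assms(1-4) ij fin] by blast
  have "recolor \<sigma> u = recolor \<sigma> v" using \<sigma> ij unfolding recolor_def by simp
  then have "\<sigma> \<in> lost" using \<sigma> unfolding lost_def proper_colorings_def by blast
  moreover have "0 < (\<Prod>v\<in>HV. y (\<tau> v))" if "\<tau> \<in> proper_colorings HV HE r" for \<tau>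
    using that y unfolding proper_colorings_def by (auto intro!: prod_pos)
  moreover have "finite lost" using finite_proper_colorings[OF fin] unfolding lost_def by auto
  ultimately have "0 < (\<Sum>\<tau>\<in>lost. \<Prod>v\<in>HV. y (\<tau> v))"
    unfolding lost_def by (intro sum_pos2[where i=\<sigma>]) (auto intro: less_imp_le)
  then show ?thesis
    using hom_density_split_class[OF fin ij assms(9-11), of HE] unfolding lost_def recolor_def
    by linarith
qed

lemma hom_density_improvable_at_boundary:
  assumes fin: "finite HV" and cm: "complete_multipartite HV HE Q" and cQ: "card Q = k"
    and k: "2 \<le> k" "k \<le> r"
  shows "x \<in> weight_simplex r \<Longrightarrow> \<exists>l<r. x l = 0
    \<Longrightarrow> \<exists>y\<in>weight_simplex r. hom_density HV HE r x < hom_density HV HE r y"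
proof (induction "card {l. l < r \<and> x l = 0}" arbitrary: x rule: less_induct)
  case (less x)
  have x: "\<And>l. l < r \<Longrightarrow> 0 \<le> x l \<and> x l \<le> 1" "\<And>l. r \<le> l \<Longrightarrow> x l = 0" "(\<Sum>l<r. x l) = 1"
    using less.prems(1) unfolding weight_simplex_def by auto
  obtain i where i: "i < r" "x i = 0" using less.prems(2) by blast
  obtain j where j: "j < r" "0 < x j"
    using x(1,3) sum_nonpos[of "{..<r}" x] by (metis lessThan_iff not_less zero_less_one)
  have ij: "i \<noteq> j" using i j by auto
  define y where "y = (\<lambda>l. if l = i \<or> l = j then x j / 2 else x l)"
  have yij: "y i + y j = x j" unfolding y_def by simp
  have yo: "\<And>l. l \<noteq> i \<Longrightarrow> l \<noteq> j \<Longrightarrow> y l = x l" unfolding y_def by simp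
  have ynn: "\<And>l. l < r \<Longrightarrow> 0 \<le> y l \<and> y l \<le> 1" using x(1) x(1)[OF j(1)] unfolding y_def by auto
  have "(\<Sum>l<r. y l) = (\<Sum>l<r. x l) + y i - x i + y j - x j"
    using i j ij by (simp add: sum.remove[of "{..<r}" i] sum.remove[of "{..<r} - {i}" j] y_def)
  then have "y \<in> weight_simplex r"
    using ynn x(2,3) i yij ij unfolding weight_simplex_def y_def by auto
  have zeros: "{l. l < r \<and> y l = 0} = {l. l < r \<and> x l = 0} - {i}"
    using j ij unfolding y_def by auto
  show ?case
  proof (cases "\<exists>l<r. y l = 0")
    case True
    have "card {l. l < r \<and> y l = 0} < card {l. l < r \<and> x l = 0}"
      unfolding zeros using i by (intro card_Diff1_less) auto
    then obtain w where "w \<in> weight_simplex r" "hom_density HV HE r y < hom_density HV HE r w"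
      using less.hyps \<open>y \<in> weight_simplex r\<close> True by blast
    moreover have "hom_density HV HE r x \<le> hom_density HV HE r y"
      using ynn by (intro hom_density_split_class_ge[OF fin i(1) j(1) ij i(2) yij yo]) auto
    ultimately show ?thesis by force
  next
    case False
    then have "hom_density HV HE r x < hom_density HV HE r y"
      using ynn hom_density_split_class_gt[OF cm cQ k fin i(1) j(1) ij i(2) yij yo]
      by (metis less_eq_real_def)
    then show ?thesis using \<open>y \<in> weight_simplex r\<close> by blast
  qed
qed

lemma weight_simplex_boundary_point_near:
  assumes x: "x \<in> weight_simplex r" and l: "l < r" and r: "2 \<le> r"
  shows "\<exists>y\<in>weight_simplex r. y l = 0 \<and> (\<forall>t<r. \<bar>x t - y t\<bar> \<le> x l)"
proof -
  have xr: "\<And>t. t < r \<Longrightarrow> 0 \<le> x t \<and> x t \<le> 1" "\<And>t. r \<le> t \<Longrightarrow> x t = 0" "(\<Sum>t<r. x t) = 1"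
    using x unfolding weight_simplex_def by auto
  define j where "j = (if l = 0 then 1 else (0::nat))"
  have j: "j < r" "j \<noteq> l" unfolding j_def using r by auto
  define y where "y = (\<lambda>t. if t = l then 0 else if t = j then x j + x l else x t)"
  have "x j + x l = (\<Sum>t\<in>{j,l}. x t)" using j by simp
  also have "\<dots> \<le> (\<Sum>t<r. x t)" using j l xr by (intro sum_mono2) auto
  finally have "x j + x l \<le> 1" using xr by simp
  then have yr: "\<And>t. t < r \<Longrightarrow> 0 \<le> y t \<and> y t \<le> 1"
    using xr(1) xr(1)[OF j(1)] xr(1)[OF l] unfolding y_def by auto
  have "(\<Sum>t<r. y t) = (\<Sum>t<r. x t) + y l - x l + y j - x j"
    using j l by (simp add: sum.remove[of "{..<r}" l] sum.remove[of "{..<r} - {l}" j] y_def)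
  then have "y \<in> weight_simplex r"
    using yr xr(2,3) j l unfolding weight_simplex_def y_def by auto
  moreover have "\<forall>t<r. \<bar>x t - y t\<bar> \<le> x l" using xr(1)[OF l] unfolding y_def by auto
  moreover have "y l = 0" unfolding y_def by simp
  ultimately show ?thesis by blast
qed

lemma hom_density_boundary_gap:
  assumes fin: "finite HV" and r: "2 \<le> r"
    and improvable: "\<And>x. x \<in> weight_simplex r \<Longrightarrow> \<exists>l<r. x l = 0 \<Longrightarrow>
      \<exists>y\<in>weight_simplex r. hom_density HV HE r x < hom_density HV HE r y"
  shows "\<exists>xs\<in>weight_simplex r. \<exists>\<delta>>0. \<exists>m>0. \<forall>x\<in>weight_simplex r.
     (\<exists>l<r. x l < \<delta>) \<longrightarrow> hom_density HV HE r x \<le> hom_density HV HE r xs - m"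
proof -
  define p where "p = hom_density HV HE r"
  define face where "face = weight_simplex r \<inter> (\<Union>l<r. {x. x l = 0})"
  define e1 where "e1 = (\<lambda>l::nat. if l = 0 then 1 else (0::real))"
  have "e1 \<in> face" using r unfolding face_def weight_simplex_def e1_def by auto
  obtain xs where xs: "xs \<in> weight_simplex r" "\<forall>y\<in>weight_simplex r. p y \<le> p xs"
    using continuous_attains_sup[OF compact_weight_simplex _ continuous_on_hom_density]
      \<open>e1 \<in> face\<close> unfolding p_def face_def by blast
  have "closed (\<Union>l<r. {x::nat\<Rightarrow>real. x l = 0})"
    by (intro closed_UN finite_lessThan ballI closed_Collect_eq) auto
  then have "compact face" unfolding face_def using compact_weight_simplex by blast
  then obtain xb where xb: "xb \<in> face" "\<forall>y\<in>face. p y \<le> p xb"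
    using continuous_attains_sup[OF _ _ continuous_on_hom_density] \<open>e1 \<in> face\<close>
    unfolding p_def by blast
  define m where "m = p xs - p xb"
  have m: "0 < m" using improvable[of xb] xb(1) xs unfolding m_def face_def p_def by force
  define L where "L = real (card (proper_colorings HV HE r) * card HV)"
  have "0 \<le> L" unfolding L_def by simp
  define \<delta> where "\<delta> = m / (2 * (L + 1))"
  have "p x \<le> p xs - m / 2" if x: "x \<in> weight_simplex r" and small: "\<exists>l<r. x l < \<delta>" for x
  proof -
    obtain l where l: "l < r" "x l < \<delta>" using small by blast
    obtain y where y: "y \<in> weight_simplex r" "y l = 0" "\<forall>t<r. \<bar>x t - y t\<bar> \<le> x l"
      using weight_simplex_boundary_point_near[OF x l(1) r] by blast
    have "y \<in> face" unfolding face_def using y l by blast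
    have "\<bar>p x - p y\<bar> \<le> L * x l"
      unfolding p_def L_def using y by (intro hom_density_lipschitz[OF fin x]) auto
    also have "\<dots> \<le> L * \<delta>" using l \<open>0 \<le> L\<close> by (intro mult_left_mono) auto
    also have "\<dots> \<le> m / 2" unfolding \<delta>_def using m \<open>0 \<le> L\<close> by (simp add: field_simps)
    finally have "p x - p y \<le> m / 2" by (rule abs_le_D1)
    moreover have "p y \<le> p xb" using xb(2) \<open>y \<in> face\<close> by blast
    moreover have "p xb = p xs - m" unfolding m_def by simp
    ultimately show ?thesis by linarith
  qed
  moreover have "0 < \<delta>" unfolding \<delta>_def using m \<open>0 \<le> L\<close> by simp
  moreover have "0 < m / 2" using m by simp
  ultimately show ?thesis using xs(1) unfolding p_def by blast
qed

section \<open>Counting homomorphisms, embeddings and copies\<close>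

definition homs :: "'b set \<Rightarrow> 'b set set \<Rightarrow> 'a set \<Rightarrow> 'a set set \<Rightarrow> ('b \<Rightarrow> 'a) set" where
  "homs HV HE V E = {\<phi> \<in> HV \<rightarrow>\<^sub>E V. \<forall>u\<in>HV. \<forall>v\<in>HV. {u,v} \<in> HE \<longrightarrow> {\<phi> u, \<phi> v} \<in> E}"

definition embs :: "'b set \<Rightarrow> 'b set set \<Rightarrow> 'a set \<Rightarrow> 'a set set \<Rightarrow> ('b \<Rightarrow> 'a) set" where
  "embs HV HE V E = {\<phi> \<in> homs HV HE V E. inj_on \<phi> HV}"

definition isos :: "'b set \<Rightarrow> 'b set set \<Rightarrow> 'a set \<Rightarrow> 'a set set \<Rightarrow> ('b \<Rightarrow> 'a) set" where
  "isos HV HE U F =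
     {f \<in> HV \<rightarrow>\<^sub>E U. bij_betw f HV U \<and> (\<forall>u\<in>HV. \<forall>v\<in>HV. {u,v} \<in> HE \<longleftrightarrow> {f u, f v} \<in> F)}"

definition auts :: "'b set \<Rightarrow> 'b set set \<Rightarrow> ('b \<Rightarrow> 'b) set" where
  "auts HV HE = isos HV HE HV HE"

lemma finite_homs: "finite HV \<Longrightarrow> finite V \<Longrightarrow> finite (homs HV HE V E)"
  unfolding homs_def by (rule finite_subset[of _ "HV \<rightarrow>\<^sub>E V"]) (auto intro: finite_PiE)

lemma card_embs_le_card_homs:
  "finite HV \<Longrightarrow> finite V \<Longrightarrow> card (embs HV HE V E) \<le> card (homs HV HE V E)"
  unfolding embs_def by (intro card_mono finite_homs) auto

lemma isos_nonempty_if_graph_iso: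
  assumes "graph_iso HV HE U F"
  shows "isos HV HE U F \<noteq> {}"
proof -
  obtain f where "bij_betw f HV U" "\<forall>u\<in>HV. \<forall>v\<in>HV. {u, v} \<in> HE \<longleftrightarrow> {f u, f v} \<in> F"
    using assms unfolding graph_iso_def by blast
  then have "restrict f HV \<in> isos HV HE U F"
    unfolding isos_def by (auto simp: bij_betw_def inj_on_def image_def)
  then show ?thesis by blast
qed

lemma isos_comp_auts:
  assumes f: "f \<in> isos HV HE U F" and g: "g \<in> auts HV HE"
  shows "restrict (f \<circ> g) HV \<in> isos HV HE U F"
proof -
  have f: "f \<in> HV \<rightarrow>\<^sub>E U" "bij_betw f HV U" "\<forall>u\<in>HV. \<forall>v\<in>HV. {u,v} \<in> HE \<longleftrightarrow> {f u, f v} \<in> F"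
    and g: "g \<in> HV \<rightarrow>\<^sub>E HV" "bij_betw g HV HV" "\<forall>u\<in>HV. \<forall>v\<in>HV. {u,v} \<in> HE \<longleftrightarrow> {g u, g v} \<in> HE"
    using f g unfolding auts_def isos_def by auto
  have "bij_betw (restrict (f \<circ> g) HV) HV U"
    using bij_betw_trans[OF g(2) f(2)] by (rule bij_betw_cong[THEN iffD1, rotated]) auto
  moreover have "{u,v} \<in> HE \<longleftrightarrow> {f (g u), f (g v)} \<in> F" if "u \<in> HV" "v \<in> HV" for u v
    using f(3) g(1,3) that by (metis PiE_mem)
  ultimately show ?thesis using f(1) g(1) unfolding isos_def by auto
qed

lemma isos_inv_comp_isos:
  assumes f0: "f0 \<in> isos HV HE U F" and f: "f \<in> isos HV HE U F"
  shows "restrict (inv_into HV f0 \<circ> f) HV \<in> auts HV HE"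
    and "restrict (f0 \<circ> restrict (inv_into HV f0 \<circ> f) HV) HV = f"
proof -
  have f0: "bij_betw f0 HV U" "\<forall>u\<in>HV. \<forall>v\<in>HV. {u,v} \<in> HE \<longleftrightarrow> {f0 u, f0 v} \<in> F"
    and f: "f \<in> HV \<rightarrow>\<^sub>E U" "bij_betw f HV U" "\<forall>u\<in>HV. \<forall>v\<in>HV. {u,v} \<in> HE \<longleftrightarrow> {f u, f v} \<in> F"
    using f0 f unfolding isos_def by auto
  define g where "g = restrict (inv_into HV f0 \<circ> f) HV"
  have fU: "\<And>v. v \<in> HV \<Longrightarrow> f v \<in> U" using f(1) by auto
  have im0: "f0 ` HV = U" using f0(1) unfolding bij_betw_def by simp
  have gH: "\<And>v. v \<in> HV \<Longrightarrow> g v \<in> HV" unfolding g_def using fU im0 by (auto intro: inv_into_into)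
  have f0g: "\<And>v. v \<in> HV \<Longrightarrow> f0 (g v) = f v" unfolding g_def using fU im0 by (auto intro: f_inv_into_f)
  have "bij_betw g HV HV"
    using bij_betw_trans[OF f(2) bij_betw_inv_into[OF f0(1)]] unfolding g_def
    by (rule bij_betw_cong[THEN iffD1, rotated]) auto
  moreover have "{u,v} \<in> HE \<longleftrightarrow> {g u, g v} \<in> HE" if "u \<in> HV" "v \<in> HV" for u v
    using f0(2) f(3) gH f0g that by metis
  moreover have "g \<in> HV \<rightarrow>\<^sub>E HV" unfolding g_def using gH[unfolded g_def] by auto
  ultimately show "g \<in> auts HV HE" unfolding auts_def isos_def by blast
  show "restrict (f0 \<circ> g) HV = f"
    using f0g f(1) by (auto simp: PiE_iff extensional_def)
qed

lemma card_isos_eq_card_auts: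
  assumes "graph_iso HV HE U F"
  shows "card (isos HV HE U F) = card (auts HV HE)"
proof -
  obtain f0 where f0: "f0 \<in> isos HV HE U F" using isos_nonempty_if_graph_iso[OF assms] by blast
  have inj0: "inj_on f0 HV" using f0 unfolding isos_def bij_betw_def by auto
  define T where "T = (\<lambda>g. restrict (f0 \<circ> g) HV)"
  have "inj_on T (auts HV HE)"
  proof (rule inj_onI)
    fix g g' assume g: "g \<in> auts HV HE" "g' \<in> auts HV HE" and "T g = T g'"
    then have "f0 (g v) = f0 (g' v)" if "v \<in> HV" for v
      using that unfolding T_def by (metis comp_apply restrict_apply')
    moreover have "g \<in> HV \<rightarrow>\<^sub>E HV" "g' \<in> HV \<rightarrow>\<^sub>E HV" using g unfolding auts_def isos_def by auto
    ultimately show "g = g'" using inj0 by (auto intro!: PiE_ext[of g HV "\<lambda>_. HV" g'] dest: inj_onD)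
  qed
  moreover have "T ` auts HV HE = isos HV HE U F"
  proof
    show "T ` auts HV HE \<subseteq> isos HV HE U F" using isos_comp_auts[OF f0] unfolding T_def by auto
    show "isos HV HE U F \<subseteq> T ` auts HV HE"
    proof
      fix f assume "f \<in> isos HV HE U F"
      then show "f \<in> T ` auts HV HE" using isos_inv_comp_isos[OF f0] unfolding T_def by (metis image_eqI)
    qed
  qed
  ultimately show ?thesis by (metis card_image)
qed

lemma embs_fibre_eq_isos:
  fixes HV :: "'b set" and HE :: "'b set set" and V :: "'a set"
  assumes sg: "sgraph V E" and UF: "U \<subseteq> V" "F \<subseteq> E" "\<forall>e\<in>F. e \<subseteq> U"
  defines "image_graph \<equiv>
    (\<lambda>\<phi>. (\<phi> ` HV, {{\<phi> u, \<phi> v} | u v. u \<in> HV \<and> v \<in> HV \<and> {u,v} \<in> HE}))"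
  shows "{\<phi> \<in> embs HV HE V E. image_graph \<phi> = (U, F)} = isos HV HE U F"
proof (intro set_eqI iffI)
  fix \<phi> assume "\<phi> \<in> {\<phi> \<in> embs HV HE V E. image_graph \<phi> = (U, F)}"
  then have \<phi>: "\<phi> \<in> HV \<rightarrow>\<^sub>E V" "inj_on \<phi> HV" and U: "\<phi> ` HV = U"
    and F: "F = {{\<phi> u, \<phi> v} | u v. u \<in> HV \<and> v \<in> HV \<and> {u,v} \<in> HE}"
    unfolding embs_def homs_def image_graph_def by auto
  have "{u,v} \<in> HE" if uv: "u \<in> HV" "v \<in> HV" "{\<phi> u, \<phi> v} \<in> F" for u v
  proof -
    obtain u' v' where w: "{\<phi> u, \<phi> v} = {\<phi> u', \<phi> v'}" "u' \<in> HV" "v' \<in> HV" "{u',v'} \<in> HE"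
      using uv(3) unfolding F by blast
    then have "(u = u' \<and> v = v') \<or> (u = v' \<and> v = u')"
      using \<phi>(2) uv by (auto simp: doubleton_eq_iff dest: inj_onD)
    then show ?thesis using w by (auto simp: insert_commute)
  qed
  then show "\<phi> \<in> isos HV HE U F"
    using \<phi> U unfolding isos_def bij_betw_def F by blast
next
  fix f assume "f \<in> isos HV HE U F"
  then have f: "f \<in> HV \<rightarrow>\<^sub>E U" "inj_on f HV" "f ` HV = U"
    "\<forall>u\<in>HV. \<forall>v\<in>HV. {u,v} \<in> HE \<longleftrightarrow> {f u, f v} \<in> F"
    unfolding isos_def bij_betw_def by auto
  have "f \<in> embs HV HE V E" unfolding embs_def homs_def using f UF(1,2) by blast
  moreover have "e \<in> {{f u, f v} | u v. u \<in> HV \<and> v \<in> HV \<and> {u,v} \<in> HE}" if e: "e \<in> F" for e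
  proof -
    have "card e = 2" "e \<subseteq> U" using sg UF e unfolding sgraph_def by auto
    then obtain a b where ab: "e = {a,b}" "a \<in> U" "b \<in> U" by (auto simp: card_2_iff)
    then obtain u v where "u \<in> HV" "v \<in> HV" "a = f u" "b = f v" using f(3) by blast
    then show ?thesis using f(4) e ab by blast
  qed
  moreover have "{{f u, f v} | u v. u \<in> HV \<and> v \<in> HV \<and> {u,v} \<in> HE} \<subseteq> F" using f(4) by blast
  ultimately show "f \<in> {\<phi> \<in> embs HV HE V E. image_graph \<phi> = (U, F)}"
    using f(3) unfolding image_graph_def by auto
qed

lemma card_embs_eq_auts_times_copies:
  fixes HV :: "'b set" and HE :: "'b set set" and V :: "'a set" and E :: "'a set set"
  assumes sg: "sgraph V E" and fin: "finite HV"
  shows "card (embs HV HE V E) = card (auts HV HE) * count_copies HV HE V E"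
proof -
  define image_graph where "image_graph \<equiv>
    (\<lambda>\<phi>::'b\<Rightarrow>'a. (\<phi> ` HV, {{\<phi> u, \<phi> v} | u v. u \<in> HV \<and> v \<in> HV \<and> {u,v} \<in> HE}))"
  define copies where
    "copies = {(U, F). U \<subseteq> V \<and> F \<subseteq> E \<and> (\<forall>e\<in>F. e \<subseteq> U) \<and> graph_iso HV HE U F}"
  have finV: "finite V" using sg unfolding sgraph_def by simp
  have "finite E" using sg finV unfolding sgraph_def by (meson PowI finite_Pow_iff finite_subset subsetI)
  have fin_copies: "finite copies" unfolding copies_def
    by (rule finite_subset[of _ "Pow V \<times> Pow E"]) (use finV \<open>finite E\<close> in auto)
  have fin_embs: "finite (embs HV HE V E)"
    using finite_homs[OF fin finV] unfolding embs_def by auto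
  have "image_graph ` embs HV HE V E \<subseteq> copies"
  proof
    fix c assume "c \<in> image_graph ` embs HV HE V E"
    then obtain \<phi> where \<phi>: "\<phi> \<in> embs HV HE V E" "c = image_graph \<phi>" by blast
    obtain U F where UF: "c = (U, F)" by (cases c)
    have UFV: "U \<subseteq> V" "F \<subseteq> E" "\<forall>e\<in>F. e \<subseteq> U"
      using \<phi> UF unfolding embs_def homs_def image_graph_def by auto
    then have "\<phi> \<in> isos HV HE U F"
      using embs_fibre_eq_isos[OF sg UFV, of HV HE] \<phi> UF unfolding image_graph_def by blast
    then have "graph_iso HV HE U F" unfolding isos_def graph_iso_def by blast
    then show "c \<in> copies" using UF UFV unfolding copies_def by blast
  qed
  then have "card (embs HV HE V E) = (\<Sum>c\<in>copies. card {\<phi> \<in> embs HV HE V E. image_graph \<phi> = c})"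
    using sum.group[OF fin_embs fin_copies, of image_graph "\<lambda>_. 1::nat"] by simp
  also have "\<dots> = (\<Sum>c\<in>copies. card (auts HV HE))"
  proof (rule sum.cong[OF refl])
    fix c assume "c \<in> copies"
    then obtain U F where UF: "c = (U, F)" "U \<subseteq> V" "F \<subseteq> E" "\<forall>e\<in>F. e \<subseteq> U" "graph_iso HV HE U F"
      unfolding copies_def by blast
    then show "card {\<phi> \<in> embs HV HE V E. image_graph \<phi> = c} = card (auts HV HE)"
      using embs_fibre_eq_isos[OF sg UF(2-4), of HV HE] card_isos_eq_card_auts[OF UF(5)]
      unfolding image_graph_def by simp
  qed
  also have "\<dots> = card (auts HV HE) * count_copies HV HE V E"
    unfolding count_copies_def copies_def by simp
  finally show ?thesis .
qed

lemma card_auts_pos: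
  assumes "finite HV" shows "0 < card (auts HV HE)"
proof -
  have "restrict id HV \<in> auts HV HE"
    unfolding auts_def isos_def by (auto simp: bij_betw_def inj_on_def)
  moreover have "finite (auts HV HE)" unfolding auts_def isos_def
    by (rule finite_subset[of _ "HV \<rightarrow>\<^sub>E HV"]) (use assms in \<open>auto intro: finite_PiE\<close>)
  ultimately show ?thesis by (auto simp: card_gt_0_iff)
qed

lemma card_PiE_collapse_le:
  assumes finH: "finite HV" and finV: "finite V" and uv: "u \<in> HV" "v \<in> HV" "u \<noteq> v"
  shows "card {\<phi> \<in> HV \<rightarrow>\<^sub>E V. \<phi> u = \<phi> v} \<le> card V ^ (card HV - 1)"
proof -
  have "inj_on (\<lambda>\<phi>. restrict \<phi> (HV - {v})) {\<phi> \<in> HV \<rightarrow>\<^sub>E V. \<phi> u = \<phi> v}"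
  proof (rule inj_onI)
    fix \<phi> \<psi> assume \<phi>: "\<phi> \<in> {\<phi> \<in> HV \<rightarrow>\<^sub>E V. \<phi> u = \<phi> v}" and \<psi>: "\<psi> \<in> {\<phi> \<in> HV \<rightarrow>\<^sub>E V. \<phi> u = \<phi> v}"
      and eq: "restrict \<phi> (HV - {v}) = restrict \<psi> (HV - {v})"
    have "\<phi> w = \<psi> w" if "w \<in> HV - {v}" for w using eq that by (metis restrict_apply')
    then have "\<phi> w = \<psi> w" if "w \<in> HV" for w using that \<phi> \<psi> uv by (cases "w = v") auto
    then show "\<phi> = \<psi>" using \<phi> \<psi> by (auto intro!: PiE_ext[of \<phi> HV "\<lambda>_. V" \<psi>])
  qed
  moreover have "(\<lambda>\<phi>. restrict \<phi> (HV - {v})) ` {\<phi> \<in> HV \<rightarrow>\<^sub>E V. \<phi> u = \<phi> v} \<subseteq> (HV - {v}) \<rightarrow>\<^sub>E V"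
  proof (rule image_subsetI)
    fix \<phi> assume "\<phi> \<in> {\<phi> \<in> HV \<rightarrow>\<^sub>E V. \<phi> u = \<phi> v}"
    then have "\<And>x. x \<in> HV \<Longrightarrow> \<phi> x \<in> V" by auto
    then show "restrict \<phi> (HV - {v}) \<in> (HV - {v}) \<rightarrow>\<^sub>E V" by auto
  qed
  moreover have "finite ((HV - {v}) \<rightarrow>\<^sub>E V)" using finH finV by (auto intro: finite_PiE)
  ultimately have "card {\<phi> \<in> HV \<rightarrow>\<^sub>E V. \<phi> u = \<phi> v} \<le> card ((HV - {v}) \<rightarrow>\<^sub>E V)"
    by (intro card_inj_on_le) auto
  also have "\<dots> = card V ^ (card HV - 1)" using finH uv by (simp add: card_PiE)
  finally show ?thesis .
qed

lemma card_homs_le_card_embs_plus: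
  assumes finH: "finite HV" and finV: "finite V"
  shows "card (homs HV HE V E) \<le> card (embs HV HE V E) + card HV ^ 2 * card V ^ (card HV - 1)"
proof -
  define collapse where "collapse = (\<lambda>(u,v). {\<phi> \<in> HV \<rightarrow>\<^sub>E V. \<phi> u = \<phi> v})"
  define pairs where "pairs = {(u,v) \<in> HV \<times> HV. u \<noteq> v}"
  have "homs HV HE V E - embs HV HE V E \<subseteq> (\<Union>p\<in>pairs. collapse p)"
    unfolding embs_def homs_def pairs_def collapse_def inj_on_def by auto
  moreover have "finite (\<Union>p\<in>pairs. collapse p)"
    by (rule finite_subset[of _ "HV \<rightarrow>\<^sub>E V"]) (use finH finV in \<open>auto simp: collapse_def intro: finite_PiE\<close>)
  ultimately have "card (homs HV HE V E - embs HV HE V E) \<le> card (\<Union>p\<in>pairs. collapse p)"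
    by (intro card_mono)
  also have "\<dots> \<le> (\<Sum>p\<in>pairs. card (collapse p))"
    by (rule card_UN_le, unfold pairs_def, rule finite_subset[of _ "HV \<times> HV"]) (use finH in auto)
  also have "\<dots> \<le> (\<Sum>p\<in>pairs. card V ^ (card HV - 1))"
    by (rule sum_mono) (use card_PiE_collapse_le[OF finH finV] in \<open>auto simp: pairs_def collapse_def\<close>)
  also have "\<dots> \<le> card HV ^ 2 * card V ^ (card HV - 1)"
  proof -
    have "card pairs \<le> card (HV \<times> HV)" unfolding pairs_def using finH by (intro card_mono) auto
    then show ?thesis by (simp add: card_cartesian_product power2_eq_square)
  qed
  finally show ?thesis
    using finite_homs[OF finH finV] card_Diff_subset[of "embs HV HE V E" "homs HV HE V E"]
      card_embs_le_card_homs[OF finH finV]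
    unfolding embs_def by (auto intro: finite_subset)
qed

section \<open>Complete multipartite graphs given by a class function\<close>

definition multipartite_graph :: "'a set \<Rightarrow> ('a \<Rightarrow> nat) \<Rightarrow> 'a set set" where
  "multipartite_graph V \<pi> = {{u,v} | u v. u \<in> V \<and> v \<in> V \<and> \<pi> u \<noteq> \<pi> v}"

definition class_weights :: "'a set \<Rightarrow> ('a \<Rightarrow> nat) \<Rightarrow> nat \<Rightarrow> real" where
  "class_weights V \<pi> t = real (card {w\<in>V. \<pi> w = t}) / real (card V)"

lemma doubleton_in_multipartite_graph_iff:
  assumes "a \<in> V" "b \<in> V"
  shows "{a,b} \<in> multipartite_graph V \<pi> \<longleftrightarrow> \<pi> a \<noteq> \<pi> b"
  using assms unfolding multipartite_graph_def by (auto simp: doubleton_eq_iff)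

lemma sgraph_multipartite_graph: "finite V \<Longrightarrow> sgraph V (multipartite_graph V \<pi>)"
  unfolding sgraph_def multipartite_graph_def by (auto simp: card_2_iff)

lemma clique_free_multipartite_graph:
  assumes "finite V" and \<pi>: "\<And>w. w \<in> V \<Longrightarrow> \<pi> w < r"
  shows "clique_free V (multipartite_graph V \<pi>) (r + 1)"
  unfolding clique_free_def
proof
  assume "\<exists>S\<subseteq>V. card S = r + 1 \<and> (\<forall>u\<in>S. \<forall>v\<in>S. u \<noteq> v \<longrightarrow> {u, v} \<in> multipartite_graph V \<pi>)"
  then obtain S where S: "S \<subseteq> V" "card S = r + 1"
    and clique: "\<forall>u\<in>S. \<forall>v\<in>S. u \<noteq> v \<longrightarrow> {u, v} \<in> multipartite_graph V \<pi>" by blast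
  have "inj_on \<pi> S"
    using S(1) clique doubleton_in_multipartite_graph_iff[of _ V _ \<pi>] by (meson inj_onI subsetD)
  moreover have "\<pi> ` S \<subseteq> {..<r}" using S \<pi> by auto
  ultimately have "card S \<le> card {..<r}" by (intro card_inj_on_le) auto
  then show False using S by simp
qed

lemma class_weights_in_weight_simplex:
  assumes finV: "finite V" and "V \<noteq> {}" and \<pi>: "\<And>w. w \<in> V \<Longrightarrow> \<pi> w < r"
  shows "class_weights V \<pi> \<in> weight_simplex r"
proof -
  have "(\<Sum>t<r. card {w\<in>V. \<pi> w = t}) = card V"
    using sum.group[OF finV finite_lessThan, where g=\<pi> and h="\<lambda>_. 1::nat"] \<pi> by auto
  then have "(\<Sum>t<r. real (card {w\<in>V. \<pi> w = t})) = real (card V)" by (metis of_nat_sum)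
  then have "(\<Sum>t<r. class_weights V \<pi> t) = 1"
    using assms unfolding class_weights_def sum_divide_distrib[symmetric] by simp
  moreover have bounds: "0 \<le> class_weights V \<pi> t \<and> class_weights V \<pi> t \<le> 1" for t
  proof -
    have "card {w\<in>V. \<pi> w = t} \<le> card V" by (rule card_mono[OF finV]) auto
    then show ?thesis unfolding class_weights_def by (cases "card V = 0") (auto simp: divide_le_eq_1)
  qed
  moreover have zero: "class_weights V \<pi> t = 0" if "r \<le> t" for t
  proof -
    have "{w\<in>V. \<pi> w = t} = {}" using \<pi> that by fastforce
    then show ?thesis unfolding class_weights_def by (simp only: card.empty)
  qed
  ultimately show ?thesis unfolding weight_simplex_def using bounds zero by simp
qed

lemma card_homs_multipartite_graph:
  assumes finH: "finite HV" and finV: "finite V" and \<pi>: "\<And>w. w \<in> V \<Longrightarrow> \<pi> w < r"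
  shows "card (homs HV HE V (multipartite_graph V \<pi>)) =
    (\<Sum>\<tau>\<in>proper_colorings HV HE r. \<Prod>v\<in>HV. card {w\<in>V. \<pi> w = \<tau> v})"
proof -
  define lift where "lift = (\<lambda>\<tau>. PiE HV (\<lambda>v. {w\<in>V. \<pi> w = \<tau> v}))"
  have "homs HV HE V (multipartite_graph V \<pi>) = (\<Union>\<tau>\<in>proper_colorings HV HE r. lift \<tau>)"
  proof (intro set_eqI iffI)
    fix \<phi> assume "\<phi> \<in> homs HV HE V (multipartite_graph V \<pi>)"
    then have \<phi>: "\<phi> \<in> HV \<rightarrow>\<^sub>E V"
      "\<forall>u\<in>HV. \<forall>v\<in>HV. {u,v} \<in> HE \<longrightarrow> {\<phi> u, \<phi> v} \<in> multipartite_graph V \<pi>"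
      unfolding homs_def by auto
    define \<tau> where "\<tau> = restrict (\<pi> \<circ> \<phi>) HV"
    have "\<tau> \<in> proper_colorings HV HE r" unfolding proper_colorings_def
    proof (intro CollectI conjI ballI impI)
      show "\<tau> \<in> HV \<rightarrow>\<^sub>E {..<r}" unfolding \<tau>_def using \<phi>(1) \<pi> by (auto simp: PiE_iff)
      fix u v assume "u \<in> HV" "v \<in> HV" "{u,v} \<in> HE"
      then show "\<tau> u \<noteq> \<tau> v"
        using \<phi> doubleton_in_multipartite_graph_iff unfolding \<tau>_def by (metis PiE_mem comp_apply restrict_apply')
    qed
    moreover have "\<phi> \<in> lift \<tau>" unfolding lift_def \<tau>_def using \<phi>(1) by (auto simp: PiE_iff)
    ultimately show "\<phi> \<in> (\<Union>\<tau>\<in>proper_colorings HV HE r. lift \<tau>)" by blast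
  next
    fix \<phi> assume "\<phi> \<in> (\<Union>\<tau>\<in>proper_colorings HV HE r. lift \<tau>)"
    then obtain \<tau> where \<tau>: "\<tau> \<in> proper_colorings HV HE r" "\<phi> \<in> lift \<tau>" by blast
    then have \<phi>: "\<phi> \<in> HV \<rightarrow>\<^sub>E V" "\<And>v. v \<in> HV \<Longrightarrow> \<pi> (\<phi> v) = \<tau> v"
      unfolding lift_def by (auto simp: PiE_iff)
    have "{\<phi> u, \<phi> v} \<in> multipartite_graph V \<pi>" if uv: "u \<in> HV" "v \<in> HV" "{u,v} \<in> HE" for u v
    proof -
      have "\<tau> u \<noteq> \<tau> v" using \<tau>(1) uv unfolding proper_colorings_def by blast
      then show ?thesis
        using \<phi> uv doubleton_in_multipartite_graph_iff[OF PiE_mem[OF \<phi>(1) uv(1)] PiE_mem[OF \<phi>(1) uv(2)]]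
        by simp
    qed
    then show "\<phi> \<in> homs HV HE V (multipartite_graph V \<pi>)" unfolding homs_def using \<phi>(1) by blast
  qed
  moreover have "card (\<Union>\<tau>\<in>proper_colorings HV HE r. lift \<tau>) = (\<Sum>\<tau>\<in>proper_colorings HV HE r. card (lift \<tau>))"
  proof (rule card_UN_disjoint)
    show "finite (proper_colorings HV HE r)" using finite_proper_colorings[OF finH] .
    show "\<forall>\<tau>\<in>proper_colorings HV HE r. finite (lift \<tau>)"
      unfolding lift_def using finH finV by (auto intro!: finite_PiE)
    show "\<forall>\<tau>\<in>proper_colorings HV HE r. \<forall>\<tau>'\<in>proper_colorings HV HE r. \<tau> \<noteq> \<tau>' \<longrightarrow> lift \<tau> \<inter> lift \<tau>' = {}"
    proof (intro ballI impI)
      fix \<tau> \<tau>' assume \<tau>: "\<tau> \<in> proper_colorings HV HE r" "\<tau>' \<in> proper_colorings HV HE r" "\<tau> \<noteq> \<tau>'"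
      show "lift \<tau> \<inter> lift \<tau>' = {}"
      proof (rule ccontr)
        assume "lift \<tau> \<inter> lift \<tau>' \<noteq> {}"
        then obtain \<phi> where "\<phi> \<in> lift \<tau>" "\<phi> \<in> lift \<tau>'" by blast
        then have "\<And>v. v \<in> HV \<Longrightarrow> \<tau> v = \<tau>' v" unfolding lift_def by (auto simp: PiE_iff)
        moreover have "\<tau> \<in> HV \<rightarrow>\<^sub>E {..<r}" "\<tau>' \<in> HV \<rightarrow>\<^sub>E {..<r}"
          using \<tau> unfolding proper_colorings_def by auto
        ultimately show False using \<tau>(3) by (metis PiE_ext)
      qed
    qed
  qed
  ultimately show ?thesis unfolding lift_def using finH by (simp add: card_PiE)
qed

lemma real_card_homs_multipartite_graph:
  assumes finH: "finite HV" and finV: "finite V" and "V \<noteq> {}" and \<pi>: "\<And>w. w \<in> V \<Longrightarrow> \<pi> w < r"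
  shows "real (card (homs HV HE V (multipartite_graph V \<pi>))) =
    real (card V) ^ card HV * hom_density HV HE r (class_weights V \<pi>)"
proof -
  have "0 < real (card V)" using finV \<open>V \<noteq> {}\<close> by (simp add: card_gt_0_iff)
  then have "(\<Prod>v\<in>HV. real (card {w\<in>V. \<pi> w = \<tau> v}))
      = real (card V) ^ card HV * (\<Prod>v\<in>HV. class_weights V \<pi> (\<tau> v))" for \<tau>
    unfolding class_weights_def prod_dividef power_divide by (simp add: prod_constant)
  then show ?thesis
    using card_homs_multipartite_graph[OF finH finV \<pi>, where HE = HE]
    unfolding hom_density_def by (simp add: sum_distrib_left)
qed

lemma card_parts_le_if_clique_free:
  assumes cm: "complete_multipartite V E Ps" and cf: "clique_free V E (r + 1)" and finV: "finite V"
  shows "card Ps \<le> r"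
proof (rule ccontr)
  assume "\<not> card Ps \<le> r"
  then obtain Ps' where Ps': "Ps' \<subseteq> Ps" "card Ps' = r + 1"
    by (metis not_less_eq_eq obtain_subset_with_card_n Suc_eq_plus1)
  have pP: "partition_on V Ps" using cm unfolding complete_multipartite_def by simp
  define rep where "rep = (\<lambda>X::'a set. SOME w. w \<in> X)"
  have rep: "rep X \<in> X" if "X \<in> Ps" for X
    using that partition_onD3[OF pP] unfolding rep_def by (metis ex_in_conv someI)
  have repV: "rep X \<in> V" if "X \<in> Ps" for X using rep[OF that] that partition_onD1[OF pP] by blast
  have rep_part: "Y = X" if "X \<in> Ps" "Y \<in> Ps" "rep X \<in> Y" for X Y
    using partition_on_part_unique[OF pP] rep that by blast
  have "inj_on rep Ps'" using rep_part Ps'(1) rep by (metis inj_onI subsetD)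
  then have "card (rep ` Ps') = r + 1" using Ps'(2) by (simp add: card_image)
  moreover have "{u, v} \<in> E" if uv: "u \<in> rep ` Ps'" "v \<in> rep ` Ps'" "u \<noteq> v" for u v
  proof -
    obtain X Y where "X \<in> Ps" "Y \<in> Ps" "u = rep X" "v = rep Y" using uv Ps'(1) by blast
    then show ?thesis
      using complete_multipartite_edge_iff[OF cm] repV rep_part uv(3) by metis
  qed
  moreover have "rep ` Ps' \<subseteq> V" using repV Ps'(1) by auto
  ultimately show False using cf unfolding clique_free_def by blast
qed

lemma complete_multipartite_eq_multipartite_graph:
  assumes cm: "complete_multipartite V E Ps" and finV: "finite V"
  obtains \<pi> where "\<forall>w\<in>V. \<pi> w < card Ps" "E = multipartite_graph V \<pi>"
    "\<forall>X\<in>Ps. \<exists>l<card Ps. {w\<in>V. \<pi> w = l} = X"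
proof -
  have pP: "partition_on V Ps" using cm unfolding complete_multipartite_def by simp
  obtain e where e: "bij_betw e {0..<card Ps} Ps"
    using ex_bij_betw_nat_finite[OF finite_elements[OF finV pP]] by blast
  define index where "index = inv_into {0..<card Ps} e"
  have index: "bij_betw index Ps {0..<card Ps}" unfolding index_def by (rule bij_betw_inv_into[OF e])
  define part where "part = (\<lambda>w. THE X. X \<in> Ps \<and> w \<in> X)"
  have part: "part w \<in> Ps" "w \<in> part w" if "w \<in> V" for w
    using partition_on_the_part[OF pP that] unfolding part_def by auto
  have part_eq: "part w = X" if "X \<in> Ps" "w \<in> X" for w X
    using part partition_on_part_unique[OF pP] partition_onD1[OF pP] that by blast
  define \<pi> where "\<pi> = index \<circ> part"
  have inj_index: "inj_on index Ps" using index by (rule bij_betw_imp_inj_on)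
  have same_class: "(\<forall>X\<in>Ps. \<not> (u \<in> X \<and> v \<in> X)) \<longleftrightarrow> \<pi> u \<noteq> \<pi> v" if "u \<in> V" "v \<in> V" for u v
  proof -
    have "(\<forall>X\<in>Ps. \<not> (u \<in> X \<and> v \<in> X)) \<longleftrightarrow> part u \<noteq> part v"
      using part[OF that(1)] part[OF that(2)] part_eq by blast
    then show ?thesis
      unfolding \<pi>_def using inj_on_eq_iff[OF inj_index part(1)[OF that(1)] part(1)[OF that(2)]] by simp
  qed
  show ?thesis
  proof
    show "\<forall>w\<in>V. \<pi> w < card Ps" using part(1) bij_betwE[OF index] unfolding \<pi>_def by simp
    show "E = multipartite_graph V \<pi>"
    proof (intro set_eqI iffI)
      fix e assume "e \<in> E"
      then obtain u v where "e = {u,v}" "u \<in> V" "v \<in> V" "\<forall>X\<in>Ps. \<not> (u \<in> X \<and> v \<in> X)"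
        using cm unfolding complete_multipartite_def by blast
      then show "e \<in> multipartite_graph V \<pi>" using same_class unfolding multipartite_graph_def by blast
    next
      fix e assume "e \<in> multipartite_graph V \<pi>"
      then obtain u v where "e = {u,v}" "u \<in> V" "v \<in> V" "\<pi> u \<noteq> \<pi> v"
        unfolding multipartite_graph_def by blast
      then show "e \<in> E" using same_class cm unfolding complete_multipartite_def by blast
    qed
    show "\<forall>X\<in>Ps. \<exists>l<card Ps. {w\<in>V. \<pi> w = l} = X"
    proof
      fix X assume X: "X \<in> Ps"
      have "{w\<in>V. \<pi> w = index X} = X"
      proof (intro set_eqI iffI)
        fix w assume "w \<in> {w\<in>V. \<pi> w = index X}"
        then have "w \<in> V" "part w = X"
          using inj_on_eq_iff[OF inj_index _ X] part(1) unfolding \<pi>_def by auto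
        then show "w \<in> X" using part(2) by blast
      next
        fix w assume "w \<in> X"
        then show "w \<in> {w\<in>V. \<pi> w = index X}"
          using part_eq[OF X] X partition_onD1[OF pP] unfolding \<pi>_def by auto
      qed
      then show "\<exists>l<card Ps. {w\<in>V. \<pi> w = l} = X" using bij_betwE[OF index] X by fastforce
    qed
  qed
qed

section \<open>Rounding a weight vector to a class function\<close>

lemma Least_Suc_threshold_eq_iff:
  fixes B :: "nat \<Rightarrow> nat"
  assumes mono: "\<And>l. B l \<le> B (Suc l)" and B0: "B 0 = 0" and w: "w < B (Suc m)"
  shows "(LEAST l. w < B (Suc l)) = t \<longleftrightarrow> B t \<le> w \<and> w < B (Suc t)"
proof
  assume t: "(LEAST l. w < B (Suc l)) = t"
  have "w < B (Suc t)" using LeastI[of "\<lambda>l. w < B (Suc l)", OF w] t by simp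
  moreover have "B t \<le> w"
  proof (cases t)
    case (Suc t')
    then have "t' < (LEAST l. w < B (Suc l))" using t by simp
    then have "\<not> w < B (Suc t')" by (rule not_less_Least)
    then show ?thesis using Suc by simp
  qed (use B0 in simp)
  ultimately show "B t \<le> w \<and> w < B (Suc t)" by simp
next
  assume t: "B t \<le> w \<and> w < B (Suc t)"
  show "(LEAST l. w < B (Suc l)) = t"
  proof (rule Least_equality)
    show "w < B (Suc t)" using t by simp
    fix l assume "w < B (Suc l)"
    show "t \<le> l"
    proof (rule ccontr)
      assume "\<not> t \<le> l"
      then have "B (Suc l) \<le> B t" using lift_Suc_mono_le[of B, OF mono, of "Suc l" t] by simp
      then show False using t \<open>w < B (Suc l)\<close> by simp
    qed
  qed
qed

lemma abs_floor_diff_sub_le: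
  fixes a b :: real
  shows "\<bar>(of_int \<lfloor>a\<rfloor> - of_int \<lfloor>b\<rfloor>) - (a - b)\<bar> \<le> 1"
  using of_int_floor_le[of a] of_int_floor_le[of b]
    real_of_int_floor_add_one_gt[of a] real_of_int_floor_add_one_gt[of b]
  by linarith

text \<open>Class t receives the vertices w with n (x 0 + ... + x (t - 1)) \<le> w < n (x 0 + ... + x t),
  both bounds rounded down.\<close>
lemma exists_class_function_near_weights:
  assumes xs: "xs \<in> weight_simplex r" and "1 \<le> r" and n: "0 < n"
  obtains c where "\<forall>w<n. c w < r" "\<forall>t<r. \<bar>class_weights {..<n} c t - xs t\<bar> \<le> 1 / real n"
proof -
  have xr: "\<And>l. r \<le> l \<Longrightarrow> xs l = 0" "(\<Sum>l<r. xs l) = 1" "\<And>l. 0 \<le> xs l"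
    using xs unfolding weight_simplex_def by (auto, metis not_le order_refl)
  define S where "S = (\<lambda>l. \<Sum>i<l. xs i)"
  define B where "B = (\<lambda>l. nat \<lfloor>real n * S l\<rfloor>)"
  have RB: "real (B l) = of_int \<lfloor>real n * S l\<rfloor>" for l
    unfolding B_def S_def using xr(3) by (simp add: sum_nonneg)
  have mono: "B l \<le> B (Suc l)" for l
    unfolding B_def S_def using xr(3) by (intro nat_mono floor_mono mult_left_mono) auto
  have B0: "B 0 = 0" unfolding B_def S_def by simp
  obtain m where m: "r = Suc m" using \<open>1 \<le> r\<close> by (cases r) auto
  have Br: "B (Suc m) = n" unfolding B_def S_def using xr(2) m by simp
  define c where "c = (\<lambda>w. LEAST l. w < B (Suc l))"
  have cr: "c w < r" if "w < n" for w
    using that Br m Least_le[of "\<lambda>l. w < B (Suc l)" m] unfolding c_def by simp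
  have fibre: "{w\<in>{..<n}. c w = t} = {B t..<B (Suc t)}" if "t < r" for t
  proof (intro set_eqI iffI)
    fix w assume "w \<in> {w\<in>{..<n}. c w = t}"
    then show "w \<in> {B t..<B (Suc t)}"
      using Least_Suc_threshold_eq_iff[OF mono B0, of w m t] Br unfolding c_def by auto
  next
    fix w assume w: "w \<in> {B t..<B (Suc t)}"
    moreover have "B (Suc t) \<le> n" using lift_Suc_mono_le[of B, OF mono, of "Suc t" "Suc m"] that m Br by simp
    ultimately have "w < n" "c w = t"
      using Least_Suc_threshold_eq_iff[OF mono B0, of w m t] Br unfolding c_def by auto
    then show "w \<in> {w\<in>{..<n}. c w = t}" by simp
  qed
  have "\<bar>class_weights {..<n} c t - xs t\<bar> \<le> 1 / real n" if "t < r" for t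
  proof -
    have "real (card {w\<in>{..<n}. c w = t}) = of_int \<lfloor>real n * S (Suc t)\<rfloor> - of_int \<lfloor>real n * S t\<rfloor>"
      using fibre[OF that] mono[of t] RB by (simp add: of_nat_diff)
    moreover have "real n * S (Suc t) - real n * S t = real n * xs t"
      unfolding S_def by (simp add: algebra_simps)
    ultimately have "\<bar>real (card {w\<in>{..<n}. c w = t}) - real n * xs t\<bar> \<le> 1"
      using abs_floor_diff_sub_le[of "real n * S (Suc t)" "real n * S t"] by simp
    then show ?thesis
      using n unfolding class_weights_def by (simp add: field_simps abs_div_pos[symmetric] flip: abs_mult)
  qed
  then show ?thesis using that cr by blast
qed

lemma count_copies_le_ex_gen:
  assumes "sgraph {..<n} E" "clique_free {..<n} E m"
  shows "count_copies HV HE {..<n} E \<le> ex_gen n HV HE m"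
proof -
  have "{count_copies HV HE {..<n} E | E. sgraph {..<n} E \<and> clique_free {..<n} E m} \<subseteq>
        (\<lambda>E. count_copies HV HE {..<n} E) ` Pow (Pow {..<n})"
    unfolding sgraph_def by blast
  then have "finite {count_copies HV HE {..<n} E | E. sgraph {..<n} E \<and> clique_free {..<n} E m}"
    by (rule finite_subset) auto
  then show ?thesis unfolding ex_gen_def using assms by (intro Max_ge) auto
qed

section \<open>Counting copies of H in complete multipartite graphs\<close>

lemma aut_count_copies_le_if_unbalanced:
  assumes finH: "finite HV" and sg: "sgraph V E" and "V \<noteq> {}"
    and cm: "complete_multipartite V E Ps" and cf: "clique_free V E (r + 1)" and "0 < \<delta>"
    and unbalanced: "card Ps < r \<or> (\<exists>X\<in>Ps. real (card X) < \<delta> * real (card V))"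
    and gap: "\<forall>x\<in>weight_simplex r. (\<exists>l<r. x l < \<delta>) \<longrightarrow> hom_density HV HE r x \<le> M"
  shows "real (card (auts HV HE) * count_copies HV HE V E) \<le> real (card V) ^ card HV * M"
proof -
  have finV: "finite V" using sg unfolding sgraph_def by simp
  obtain \<pi> where \<pi>: "\<forall>w\<in>V. \<pi> w < card Ps" and E: "E = multipartite_graph V \<pi>"
    and parts: "\<forall>X\<in>Ps. \<exists>l<card Ps. {w\<in>V. \<pi> w = l} = X"
    using complete_multipartite_eq_multipartite_graph[OF cm finV] by blast
  have "card Ps \<le> r" using card_parts_le_if_clique_free[OF cm cf finV] .
  then have \<pi>r: "\<And>w. w \<in> V \<Longrightarrow> \<pi> w < r" using \<pi> by fastforce
  have "\<exists>l<r. class_weights V \<pi> l < \<delta>"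
  proof (cases "card Ps < r")
    case True
    have "{w\<in>V. \<pi> w = card Ps} = {}" using \<pi> by auto
    then have "class_weights V \<pi> (card Ps) = 0" unfolding class_weights_def by (simp only: card.empty)
    then show ?thesis using True \<open>0 < \<delta>\<close> by auto
  next
    case False
    then obtain X l where "real (card X) < \<delta> * real (card V)" "l < card Ps" "{w\<in>V. \<pi> w = l} = X"
      using unbalanced parts by blast
    moreover have "0 < real (card V)" using finV \<open>V \<noteq> {}\<close> by (simp add: card_gt_0_iff)
    ultimately have "class_weights V \<pi> l < \<delta>" "l < r"
      using \<open>card Ps \<le> r\<close> unfolding class_weights_def by (auto simp: divide_less_eq)
    then show ?thesis by blast
  qed
  moreover have "class_weights V \<pi> \<in> weight_simplex r"
    using finV \<open>V \<noteq> {}\<close> \<pi>r by (rule class_weights_in_weight_simplex)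
  ultimately have "hom_density HV HE r (class_weights V \<pi>) \<le> M" using gap by blast
  have "real (card (auts HV HE) * count_copies HV HE V E) = real (card (embs HV HE V E))"
    using card_embs_eq_auts_times_copies[OF sg finH] by simp
  also have "\<dots> \<le> real (card (homs HV HE V E))" using card_embs_le_card_homs[OF finH finV] by simp
  also have "\<dots> = real (card V) ^ card HV * hom_density HV HE r (class_weights V \<pi>)"
    unfolding E by (rule real_card_homs_multipartite_graph[OF finH finV \<open>V \<noteq> {}\<close> \<pi>r])
  also have "\<dots> \<le> real (card V) ^ card HV * M"
    using \<open>hom_density HV HE r (class_weights V \<pi>) \<le> M\<close> by (intro mult_left_mono) simp_all
  finally show ?thesis .
qed

lemma aut_ex_gen_ge:
  assumes finH: "finite HV" and "HV \<noteq> {}" and xs: "xs \<in> weight_simplex r" and "1 \<le> r" and "0 < n"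
  shows "real n ^ card HV * hom_density HV HE r xs
      - real (card (proper_colorings HV HE r) * card HV + card HV ^ 2) * real n ^ (card HV - 1)
    \<le> real (card (auts HV HE) * ex_gen n HV HE (r + 1))"
proof -
  obtain c where c: "\<forall>w<n. c w < r" and near: "\<forall>t<r. \<bar>class_weights {..<n} c t - xs t\<bar> \<le> 1 / real n"
    using exists_class_function_near_weights[OF xs \<open>1 \<le> r\<close> \<open>0 < n\<close>] by blast
  define E where "E = multipartite_graph {..<n} c"
  define K where "K = real (card (proper_colorings HV HE r) * card HV)"
  define N1 where "N1 = real n ^ (card HV - 1)"
  have N: "real n ^ card HV = real n * N1"
    using \<open>HV \<noteq> {}\<close> finH unfolding N1_def by (metis card_gt_0_iff power_eq_if not_gr0)
  have cr: "\<And>w. w \<in> {..<n} \<Longrightarrow> c w < r" using c by auto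
  have ne: "{..<n} \<noteq> {}" using \<open>0 < n\<close> by auto
  have "\<bar>hom_density HV HE r (class_weights {..<n} c) - hom_density HV HE r xs\<bar> \<le> K * (1 / real n)"
    unfolding K_def using near
    by (intro hom_density_lipschitz[OF finH class_weights_in_weight_simplex[OF _ ne cr] xs]) auto
  then have "hom_density HV HE r xs \<le> hom_density HV HE r (class_weights {..<n} c) + K * (1 / real n)"
    by (simp add: abs_le_iff)
  then have "real n ^ card HV * hom_density HV HE r xs
      \<le> real n ^ card HV * (hom_density HV HE r (class_weights {..<n} c) + K * (1 / real n))"
    by (rule mult_left_mono) simp
  also have "\<dots> = real n ^ card HV * hom_density HV HE r (class_weights {..<n} c) + K * N1"
    using \<open>0 < n\<close> unfolding N by (simp add: field_simps)
  finally have "real n ^ card HV * hom_density HV HE r xs - K * N1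
      \<le> real n ^ card HV * hom_density HV HE r (class_weights {..<n} c)" by simp
  also have "\<dots> = real (card (homs HV HE {..<n} E))"
    unfolding E_def using real_card_homs_multipartite_graph[OF finH finite_lessThan ne cr] by simp
  also have "\<dots> \<le> real (card (embs HV HE {..<n} E)) + real (card HV ^ 2) * N1"
    using card_homs_le_card_embs_plus[OF finH finite_lessThan, where HE = HE and E = E] unfolding N1_def
    by (metis card_lessThan of_nat_add of_nat_le_iff of_nat_mult of_nat_power)
  also have "real (card (embs HV HE {..<n} E)) = real (card (auts HV HE) * count_copies HV HE {..<n} E)"
    using card_embs_eq_auts_times_copies[OF sgraph_multipartite_graph[OF finite_lessThan] finH] unfolding E_def by simp
  also have "\<dots> \<le> real (card (auts HV HE) * ex_gen n HV HE (r + 1))"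
  proof -
    have "sgraph {..<n} E" unfolding E_def by (rule sgraph_multipartite_graph) simp
    moreover have "clique_free {..<n} E (r + 1)"
      unfolding E_def using finite_lessThan cr by (rule clique_free_multipartite_graph)
    ultimately have "count_copies HV HE {..<n} E \<le> ex_gen n HV HE (r + 1)"
      by (rule count_copies_le_ex_gen)
    then show ?thesis by (simp del: of_nat_mult add: mult_le_mono2)
  qed
  finally show ?thesis unfolding K_def N1_def by (simp add: algebra_simps)
qed

lemma near_extremal_multipartite_balanced:
  fixes HV :: "'b set" and V :: "'a set"
  assumes finH: "finite HV" "HV \<noteq> {}" and "1 \<le> r" and xs: "xs \<in> weight_simplex r"
    and "0 < \<delta>" "0 < m"
    and gap: "\<forall>x\<in>weight_simplex r. (\<exists>l<r. x l < \<delta>) \<longrightarrow>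
      hom_density HV HE r x \<le> hom_density HV HE r xs - m"
    and sg: "sgraph V E" and n: "card V = n"
    and large: "2 * real (card (proper_colorings HV HE r) * card HV + card HV ^ 2) / m < real n"
    and cm: "complete_multipartite V E Ps" and cf: "clique_free V E (r + 1)"
    and near: "real (ex_gen n HV HE (r + 1)) - m / (4 * real (card (auts HV HE))) * real n ^ card HV
      \<le> real (count_copies HV HE V E)"
  shows "card Ps = r \<and> (\<forall>X\<in>Ps. \<delta> * real n \<le> real (card X))"
proof (rule ccontr)
  define A where "A = real (card (auts HV HE))"
  define C where "C = real (card (proper_colorings HV HE r) * card HV + card HV ^ 2)"
  define N1 where "N1 = real n ^ (card HV - 1)"
  have "0 < A" unfolding A_def using card_auts_pos[OF finH(1)] by simp
  have "0 \<le> 2 * C / m" unfolding C_def using \<open>0 < m\<close> by simp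
  then have "0 < n" using large unfolding C_def[symmetric] by simp
  then have "V \<noteq> {}" "0 < N1" using n unfolding N1_def by auto
  obtain h' where "card HV = Suc h'" using finH by (metis card_gt_0_iff gr0_implies_Suc)
  then have N: "real n ^ card HV = real n * N1" unfolding N1_def by simp
  have finV: "finite V" using sg unfolding sgraph_def by simp
  assume "\<not> ?thesis"
  then have "card Ps < r \<or> (\<exists>X\<in>Ps. real (card X) < \<delta> * real (card V))"
    using card_parts_le_if_clique_free[OF cm cf finV] n by (auto simp: not_le)
  then have "A * real (count_copies HV HE V E) \<le> real n ^ card HV * (hom_density HV HE r xs - m)"
    using aut_count_copies_le_if_unbalanced[OF finH(1) sg \<open>V \<noteq> {}\<close> cm cf \<open>0 < \<delta>\<close> _ gap] n
    unfolding A_def by simp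
  moreover have "real n ^ card HV * hom_density HV HE r xs - C * N1 \<le> A * real (ex_gen n HV HE (r + 1))"
    using aut_ex_gen_ge[OF finH xs \<open>1 \<le> r\<close> \<open>0 < n\<close>, where HE = HE] unfolding A_def C_def N1_def by simp
  moreover have "A * real (ex_gen n HV HE (r + 1)) - m / 4 * real n ^ card HV \<le> A * real (count_copies HV HE V E)"
    using mult_left_mono[OF near, of A] \<open>0 < A\<close> unfolding A_def by (simp add: algebra_simps)
  ultimately have "3 / 4 * m * real n * N1 \<le> C * N1" unfolding N by (simp add: algebra_simps)
  then have "3 / 4 * m * real n \<le> C" using \<open>0 < N1\<close> by simp
  moreover have "2 * C < m * real n" using large \<open>0 < m\<close> unfolding C_def[symmetric]
    by (simp add: pos_divide_less_eq mult.commute)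
  moreover have "0 < m * real n" using \<open>0 < m\<close> \<open>0 < n\<close> by simp
  ultimately show False by linarith
qed

theorem lemma2p1:
  fixes HV :: "'b set" and HE :: "'b set set" and k r h :: nat
  assumes "k \<ge> 2" and "r \<ge> k"
    and "sgraph HV HE"
    and "\<exists>Q. complete_multipartite HV HE Q \<and> card Q = k"
    and "card HV = h"
  shows "\<exists>\<gamma>0::real. \<gamma>0 > 0 \<and>
    (\<forall>\<gamma>::real. 0 < \<gamma> \<and> \<gamma> < \<gamma>0 \<longrightarrow>
      (\<exists>\<zeta>::real. \<zeta> > 0 \<and> (\<exists>n0::nat. \<forall>n \<ge> n0.
         \<forall>(PV::'a set) PE Ps.
           sgraph PV PE \<and> card PV = n \<and> complete_multipartite PV PE Ps \<and>
           clique_free PV PE (r + 1) \<and>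
           real (count_copies HV HE PV PE) \<ge> real (ex_gen n HV HE (r + 1)) - \<zeta> * real n ^ h
           \<longrightarrow> card Ps = r \<and> (\<forall>X\<in>Ps. real (card X) \<ge> \<gamma> * real n))))"
proof -
  have finH: "finite HV" using assms(3) unfolding sgraph_def by simp
  obtain Q where cmH: "complete_multipartite HV HE Q" and "card Q = k" using assms(4) by blast
  moreover have "Q \<noteq> {}" using \<open>card Q = k\<close> assms(1) by auto
  ultimately have "HV \<noteq> {}" using partition_on_empty unfolding complete_multipartite_def by blast
  have "2 \<le> r" using assms(1,2) by simp
  obtain xs \<delta> m where xs: "xs \<in> weight_simplex r" and "0 < \<delta>" "0 < m"
    and gap: "\<forall>x\<in>weight_simplex r. (\<exists>l<r. x l < \<delta>) \<longrightarrow>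
      hom_density HV HE r x \<le> hom_density HV HE r xs - m"
    using hom_density_boundary_gap[OF finH \<open>2 \<le> r\<close>
        hom_density_improvable_at_boundary[OF finH cmH \<open>card Q = k\<close> assms(1,2)]] by blast
  define C where "C = real (card (proper_colorings HV HE r) * card HV + card HV ^ 2)"
  define \<zeta> where "\<zeta> = m / (4 * real (card (auts HV HE)))"
  define n0 where "n0 = nat \<lceil>2 * C / m\<rceil> + 1"
  have "0 < \<zeta>" unfolding \<zeta>_def using \<open>0 < m\<close> card_auts_pos[OF finH] by simp
  have balanced: "card Ps = r \<and> (\<forall>X\<in>Ps. real (card X) \<ge> \<gamma> * real n)"
    if "0 < \<gamma> \<and> \<gamma> < \<delta>" "n \<ge> n0" and P: "sgraph PV PE \<and> card PV = n \<and>
      complete_multipartite PV PE Ps \<and> clique_free PV PE (r + 1) \<and>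
      real (count_copies HV HE PV PE) \<ge> real (ex_gen n HV HE (r + 1)) - \<zeta> * real n ^ h"
    for \<gamma> n and PV :: "'a set" and PE Ps
  proof -
    have "2 * C / m < real n"
      using of_nat_mono[OF \<open>n \<ge> n0\<close>, where 'a = real] real_nat_ceiling_ge[of "2 * C / m"]
      unfolding n0_def by simp
    then have "card Ps = r \<and> (\<forall>X\<in>Ps. \<delta> * real n \<le> real (card X))"
      using P assms(1,2,5) unfolding C_def \<zeta>_def
      by (intro near_extremal_multipartite_balanced[OF finH \<open>HV \<noteq> {}\<close> _ xs \<open>0 < \<delta>\<close> \<open>0 < m\<close> gap])
        auto
    moreover have "\<gamma> * real n \<le> \<delta> * real n" using that(1) by (intro mult_right_mono) auto
    ultimately show ?thesis by (meson order_trans)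
  qed
  show ?thesis
  proof (rule exI[of _ \<delta>], intro conjI allI impI)
    show "0 < \<delta>" by fact
  qed (rule exI[of _ \<zeta>], rule conjI, rule \<open>0 < \<zeta>\<close>, rule exI[of _ n0], intro allI impI,
      rule balanced, assumption+)
qed

end
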